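(* Let $n\ge 1$, $p\ge 0$ be integers and let $S\subseteq\mathbb{R}^n\times\mathbb{R}^p$ be permutation-invariant with respect to $x$. Let $S_0=S\cap\{(u,z)\in\mathbb{R}^n\times\mathbb{R}^p\mid u_1\ge u_2\ge\dots\ge u_n\}$. Then $$\mathrm{conv}(S)=\{(x,z)\in\mathbb{R}^n\times\mathbb{R}^p\mid \exists u\in\mathbb{R}^n \text{ such that } (u,z)\in\mathrm{conv}(S_0) \text{ and } u\ge_m x\}.$$
   Context: A set $S\subseteq\mathbb{R}^n\times\mathbb{R}^p$ is permutation-invariant with respect to $x$ if $(x,z)\in S$ implies $(Px,z)\in S$ for every $n\times n$ permutation matrix $P$. For $x\in\mathbb{R}^n$, $x_{[i]}$ denotes the $i$-th largest component of $x$. For $x,y\in\mathbb{R}^n$, $x\ge_m y$ ($x$ majorizes $y$) means $\sum_{i=1}^j x_{[i]}\ge\sum_{i=1}^j y_{[i]}$ for $j=1,\dots,n-1$ and $\sum_{i=1}^n x_{[i]}=\sum_{i=1}^n y_{[i]}$. $\mathrm{conv}$ denotes convex hull. *)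

theory Defs
  imports "HOL-Analysis.Analysis" "HOL-Library.Multiset"
begin

definition perm_matrix :: "('n::finite \<Rightarrow> 'n) \<Rightarrow> real^'n^'n" where
  "perm_matrix \<sigma> = (\<chi> i j. if \<sigma> i = j then 1 else 0)"

definition is_perm_matrix :: "real^'n^'n::finite \<Rightarrow> bool" where
  "is_perm_matrix P \<longleftrightarrow> (\<exists>\<sigma>. \<sigma> permutes (UNIV::'n set) \<and> P = perm_matrix \<sigma>)"

definition perm_invariant_x :: "((real^'n::finite) \<times> 'b) set \<Rightarrow> bool" where
  "perm_invariant_x S \<longleftrightarrow>
     (\<forall>x z P. (x, z) \<in> S \<and> is_perm_matrix P \<longrightarrow> (P *v x, z) \<in> S)"

text \<open>Components of x in decreasing order: (decr x) ! (i-1) is x_[i].\<close>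
definition decr :: "real^'n::finite \<Rightarrow> real list" where
  "decr x = rev (sorted_list_of_multiset (image_mset (\<lambda>i. x $ i) (mset_set (UNIV::'n set))))"

definition largest :: "real^'n::finite \<Rightarrow> nat \<Rightarrow> real" where
  "largest x i = decr x ! (i - 1)"

definition majorizes :: "real^'n::finite \<Rightarrow> real^'n \<Rightarrow> bool" where
  "majorizes x y \<longleftrightarrow>
     (\<forall>j\<in>{1..<CARD('n)}. (\<Sum>i=1..j. largest x i) \<ge> (\<Sum>i=1..j. largest y i)) \<and>
     (\<Sum>i=1..CARD('n). largest x i) = (\<Sum>i=1..CARD('n). largest y i)"

end

theory Submission
  imports Defs
begin

text \<open>The sum of the \<open>j\<close> largest entries of \<open>x\<close> is the maximum of \<open>\<Sum>i\<in>I. x\<^sub>i\<close> over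
  \<open>j\<close>-element index sets \<open>I\<close>. Hence it is sublinear in \<open>x\<close>, and linear on the cone of vectors
  with decreasing entries, so majorization by a point of \<open>conv S\<^sub>0\<close> is preserved by convex
  combinations; as every point of \<open>S\<close> is majorized by its sorted rearrangement, which lies in
  \<open>S\<^sub>0\<close>, this gives one inclusion. Conversely, if \<open>u\<close> majorizes \<open>x\<close> then \<open>x\<close> is a convex
  combination of the rearrangements of \<open>u\<close> (Rado): otherwise some \<open>c\<close> separates \<open>x\<close> from
  them, but by Abel summation the rearrangement of \<open>u\<close> ordered like \<open>c\<close> has \<open>c\<close>-value at
  least \<open>c \<bullet> x\<close>. Permutation invariance of \<open>conv S\<close> then puts \<open>(x, z)\<close> into \<open>conv S\<close>.\<close>

definition nth_elem :: "nat \<Rightarrow> 'n::{finite,linorder}" where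
  "nth_elem k = sorted_list_of_set UNIV ! k"

definition elem_index :: "'n::{finite,linorder} \<Rightarrow> nat" where
  "elem_index = inv_into {..<CARD('n)} nth_elem"

lemma bij_betw_nth_elem: "bij_betw nth_elem {..<CARD('n)} (UNIV::'n::{finite,linorder} set)"
  unfolding nth_elem_def by (rule bij_betw_nth) (simp_all add: length_sorted_list_of_set)

lemma nth_elem_less:
  "k < l \<Longrightarrow> l < CARD('n) \<Longrightarrow> (nth_elem k :: 'n::{finite,linorder}) < nth_elem l"
  unfolding nth_elem_def
  by (metis sorted_wrt_nth_less strict_sorted_list_of_set length_sorted_list_of_set)

lemma nth_elem_mono:
  "k \<le> l \<Longrightarrow> l < CARD('n) \<Longrightarrow> (nth_elem k :: 'n::{finite,linorder}) \<le> nth_elem l"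
  using nth_elem_less[where 'n='n, of k l] by (cases "k = l") auto

lemma bij_betw_elem_index: "bij_betw elem_index (UNIV::'n::{finite,linorder} set) {..<CARD('n)}"
  unfolding elem_index_def by (rule bij_betw_inv_into[OF bij_betw_nth_elem])

lemma elem_index_less [simp]: "elem_index (i::'n::{finite,linorder}) < CARD('n)"
  using bij_betw_elem_index bij_betwE by blast

lemma nth_elem_elem_index [simp]: "nth_elem (elem_index i) = i"
  unfolding elem_index_def by (meson UNIV_I bij_betw_inv_into_right bij_betw_nth_elem)

lemma elem_index_mono: "i \<le> j \<Longrightarrow> elem_index i \<le> elem_index j"
  by (metis bij_betw_elem_index bij_betwE UNIV_I lessThan_iff nth_elem_less nth_elem_elem_index not_le)

definition decr_enum :: "real^'n::finite \<Rightarrow> (nat \<Rightarrow> 'n) \<Rightarrow> bool" where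
  "decr_enum x g \<longleftrightarrow> bij_betw g {..<CARD('n)} UNIV \<and> antimono_on {..<CARD('n)} (\<lambda>k. x $ g k)"

lemma largest_decr_enum:
  fixes x :: "real^'n::finite"
  assumes "decr_enum x g" and "k < CARD('n)"
  shows "largest x (Suc k) = x $ g k"
proof -
  define xs where "xs = map (\<lambda>k. x $ g k) [0..<CARD('n)]"
  have "mset (rev xs) = image_mset (($) x) (image_mset g (mset_set {..<CARD('n)}))"
    by (simp add: xs_def atLeast0LessThan multiset.map_comp comp_def)
  also have "\<dots> = image_mset (($) x) (mset_set UNIV)"
    using assms(1) by (simp add: decr_enum_def bij_betw_def image_mset_mset_set)
  finally have "mset (rev xs) = image_mset (($) x) (mset_set UNIV)" .
  moreover have "sorted (rev xs)"
    using assms(1) unfolding xs_def sorted_rev_iff_nth_mono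
    by (simp add: decr_enum_def monotone_on_def)
  ultimately have "decr x = xs"
    unfolding decr_def by (metis rev_rev_ident sorted_list_of_multiset_mset sorted_sort_id)
  then show ?thesis using assms(2) by (simp add: largest_def xs_def)
qed

lemma sum_largest_decr_enum:
  fixes x :: "real^'n::finite"
  assumes "decr_enum x g" and "j \<le> CARD('n)"
  shows "(\<Sum>i=1..j. largest x i) = (\<Sum>k<j. x $ g k)"
  using assms by (simp add: sum.atLeast1_atMost_eq largest_decr_enum)

lemma decr_enum_exists: "\<exists>g. decr_enum (x::real^'n::finite) g"
proof -
  obtain xs :: "'n list" where xs: "distinct xs" "set xs = UNIV"
    using finite_distinct_list[of "UNIV :: 'n set"] by auto
  define ys where "ys = sort_key (\<lambda>i. - x $ i) xs"
  have "length ys = CARD('n)"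
    using xs distinct_card[of xs] by (simp add: ys_def)
  then have "bij_betw ((!) ys) {..<CARD('n)} UNIV"
    by (intro bij_betw_nth) (simp_all add: ys_def xs)
  moreover have "sorted (map (\<lambda>i. - x $ i) ys)"
    unfolding ys_def by (rule sorted_sort_key)
  then have "antimono_on {..<CARD('n)} (\<lambda>k. x $ (ys ! k))"
    using \<open>length ys = CARD('n)\<close> by (intro monotone_onI) (auto dest: sorted_nth_mono)
  ultimately show ?thesis unfolding decr_enum_def by blast
qed

lemma decr_enum_nth_elem:
  fixes v :: "real^'n::{finite,linorder}"
  assumes "antimono (($) v)"
  shows "decr_enum v nth_elem"
  unfolding decr_enum_def
  using bij_betw_nth_elem assms by (auto intro!: monotone_onI nth_elem_mono dest: antimonoD)

lemma permutes_sorting_exists: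
  fixes x :: "real^'n::{finite,linorder}"
  shows "\<exists>\<pi>. \<pi> permutes UNIV \<and> antimono (\<lambda>i. x $ \<pi> i)"
proof -
  obtain g where g: "bij_betw g {..<CARD('n)} UNIV" "antimono_on {..<CARD('n)} (\<lambda>k. x $ g k)"
    using decr_enum_exists[of x] by (auto simp: decr_enum_def)
  define \<pi> where "\<pi> = g \<circ> (elem_index :: 'n \<Rightarrow> nat)"
  have "bij \<pi>" unfolding \<pi>_def by (rule bij_betw_trans[OF bij_betw_elem_index g(1)])
  moreover have "antimono (\<lambda>i. x $ \<pi> i)"
    using g(2) by (auto intro!: antimonoI simp: \<pi>_def monotone_on_def elem_index_mono)
  ultimately show ?thesis by (auto intro: bij_imp_permutes)
qed

lemma largest_permute:
  fixes x :: "real^'n::finite"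
  assumes "\<pi> permutes UNIV"
  shows "largest (\<chi> i. x $ \<pi> i) = largest x"
proof -
  have "image_mset (\<lambda>i. x $ \<pi> i) (mset_set UNIV) = image_mset (($) x) (image_mset \<pi> (mset_set UNIV))"
    by (simp add: multiset.map_comp comp_def)
  also have "\<dots> = image_mset (($) x) (mset_set UNIV)"
    using assms by (simp add: image_mset_mset_set permutes_inj permutes_image)
  finally show ?thesis by (simp add: largest_def decr_def fun_eq_iff)
qed

lemma majorizes_permute:
  assumes "\<pi> permutes UNIV"
  shows "majorizes (\<chi> i. x $ \<pi> i) x"
  using largest_permute[OF assms] by (simp add: majorizes_def)

lemma sum_le_sum_lessThan_if_antimono_on:
  fixes y :: "nat \<Rightarrow> 'a::{semiring_1,ordered_comm_monoid_add}"
  assumes y: "antimono_on {..<n} y" and J: "J \<subseteq> {..<n}"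
  shows "sum y J \<le> sum y {..<card J}"
proof -
  define j where "j = card J"
  have fin: "finite J" using J finite_subset by blast
  have "j \<le> n" using card_mono[OF _ J] by (simp add: j_def)
  define A where "A = J - {..<j}"
  define B where "B = {..<j} - J"
  have card_AB: "card A = card B"
    using card_Int_Diff[OF fin, of "{..<j}"] card_Int_Diff[of "{..<j}" J]
    by (simp add: A_def B_def j_def Int_commute)
  have "sum y A \<le> of_nat (card A) * y (j - 1)"
    using y J by (intro sum_bounded_above) (auto simp: A_def monotone_on_def)
  also have "\<dots> \<le> sum y B"
    unfolding card_AB using y \<open>j \<le> n\<close>
    by (intro sum_bounded_below) (auto simp: B_def monotone_on_def)
  finally have "sum y A \<le> sum y B" .
  then show ?thesis
    using sum.Int_Diff[OF fin, of y "{..<j}"] sum.Int_Diff[of "{..<j}" y J]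
    by (simp add: A_def B_def j_def Int_commute add_left_mono)
qed

lemma sum_le_sum_largest:
  fixes x :: "real^'n::finite"
  shows "(\<Sum>i\<in>I. x $ i) \<le> (\<Sum>i=1..card I. largest x i)"
proof -
  obtain g where g: "decr_enum x g" using decr_enum_exists by blast
  then have bij: "bij_betw g {..<CARD('n)} UNIV" by (simp add: decr_enum_def)
  define J where "J = {k \<in> {..<CARD('n)}. g k \<in> I}"
  have J: "J \<subseteq> {..<CARD('n)}" by (auto simp: J_def)
  have I: "I = g ` J" and inj: "inj_on g J"
    using bij unfolding J_def bij_betw_def by (auto intro: inj_on_subset)
  have card_I: "card I = card J" unfolding I by (rule card_image[OF inj])
  have "(\<Sum>i\<in>I. x $ i) = (\<Sum>k\<in>J. x $ g k)"
    unfolding I by (rule sum.reindex_cong[OF inj refl refl])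
  also have "\<dots> \<le> (\<Sum>k<card J. x $ g k)"
    using g J by (intro sum_le_sum_lessThan_if_antimono_on) (auto simp: decr_enum_def)
  also have "\<dots> = (\<Sum>i=1..card I. largest x i)"
    unfolding card_I using card_mono[OF _ J] by (intro sum_largest_decr_enum[OF g, symmetric]) simp
  finally show ?thesis .
qed

lemma sum_largest_all:
  fixes x :: "real^'n::finite"
  shows "(\<Sum>i=1..CARD('n). largest x i) = sum (($) x) UNIV"
proof -
  obtain g where g: "decr_enum x g" using decr_enum_exists by blast
  then have "(\<Sum>i=1..CARD('n). largest x i) = (\<Sum>k<CARD('n). x $ g k)"
    by (rule sum_largest_decr_enum[OF _ order_refl])
  also have "\<dots> = sum (($) x) UNIV"
    using g by (simp add: decr_enum_def sum.reindex_bij_betw)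
  finally show ?thesis .
qed

lemma sum_largest_antimono:
  fixes v :: "real^'n::{finite,linorder}"
  assumes "antimono (($) v)" and "j \<le> CARD('n)"
  shows "(\<Sum>i=1..j. largest v i) = (\<Sum>k<j. v $ nth_elem k)"
  by (rule sum_largest_decr_enum[OF decr_enum_nth_elem[OF assms(1)] assms(2)])

lemma sum_largest_scaleR_add_le:
  fixes x y :: "real^'n::finite"
  assumes "0 \<le> a" "0 \<le> b" and "j \<le> CARD('n)"
  shows "(\<Sum>i=1..j. largest (a *\<^sub>R x + b *\<^sub>R y) i)
    \<le> a * (\<Sum>i=1..j. largest x i) + b * (\<Sum>i=1..j. largest y i)"
proof -
  obtain g where g: "decr_enum (a *\<^sub>R x + b *\<^sub>R y) g" using decr_enum_exists by blast
  then have inj: "inj_on g {..<j}"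
    using assms(3) by (auto simp: decr_enum_def bij_betw_def intro: inj_on_subset)
  define I where "I = g ` {..<j}"
  have card_I: "card I = j" by (simp add: I_def card_image[OF inj])
  have "(\<Sum>i=1..j. largest (a *\<^sub>R x + b *\<^sub>R y) i) = (\<Sum>i\<in>I. (a *\<^sub>R x + b *\<^sub>R y) $ i)"
    using sum_largest_decr_enum[OF g assms(3)] by (simp add: I_def sum.reindex[OF inj])
  also have "\<dots> = a * (\<Sum>i\<in>I. x $ i) + b * (\<Sum>i\<in>I. y $ i)"
    by (simp add: sum.distrib sum_distrib_left)
  also have "\<dots> \<le> a * (\<Sum>i=1..j. largest x i) + b * (\<Sum>i=1..j. largest y i)"
    using assms(1,2) sum_le_sum_largest[of x I] sum_le_sum_largest[of y I]
    unfolding card_I by (intro add_mono mult_left_mono)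
  finally show ?thesis .
qed

lemma majorizes_scaleR_add:
  fixes u v x y :: "real^'n::{finite,linorder}"
  assumes "antimono (($) u)" "antimono (($) v)" and "majorizes u x" "majorizes v y"
    and "0 \<le> a" "0 \<le> b"
  shows "majorizes (a *\<^sub>R u + b *\<^sub>R v) (a *\<^sub>R x + b *\<^sub>R y)"
proof -
  have anti: "antimono (($) (a *\<^sub>R u + b *\<^sub>R v))"
    using assms(1,2,5,6) by (intro antimonoI) (simp add: add_mono mult_left_mono antimonoD)
  have "(\<Sum>i=1..j. largest (a *\<^sub>R x + b *\<^sub>R y) i) \<le> (\<Sum>i=1..j. largest (a *\<^sub>R u + b *\<^sub>R v) i)"
    if j: "j \<in> {1..<CARD('n)}" for j
  proof -
    have jn: "j \<le> CARD('n)" using j by simp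
    have "(\<Sum>i=1..j. largest x i) \<le> (\<Sum>i=1..j. largest u i)"
      and "(\<Sum>i=1..j. largest y i) \<le> (\<Sum>i=1..j. largest v i)"
      using assms(3,4) j by (simp_all add: majorizes_def)
    then have "a * (\<Sum>i=1..j. largest x i) + b * (\<Sum>i=1..j. largest y i)
        \<le> a * (\<Sum>i=1..j. largest u i) + b * (\<Sum>i=1..j. largest v i)"
      using assms(5,6) by (intro add_mono mult_left_mono)
    also have "\<dots> = (\<Sum>i=1..j. largest (a *\<^sub>R u + b *\<^sub>R v) i)"
      unfolding sum_largest_antimono[OF assms(1) jn] sum_largest_antimono[OF assms(2) jn]
        sum_largest_antimono[OF anti jn] by (simp add: sum.distrib sum_distrib_left)
    finally show ?thesis
      using sum_largest_scaleR_add_le[OF assms(5,6) jn, of x y] by simp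
  qed
  moreover have "(\<Sum>i=1..CARD('n). largest (a *\<^sub>R u + b *\<^sub>R v) i)
      = (\<Sum>i=1..CARD('n). largest (a *\<^sub>R x + b *\<^sub>R y) i)"
    using assms(3,4) unfolding majorizes_def sum_largest_all
    by (simp add: sum.distrib flip: sum_distrib_left)
  ultimately show ?thesis unfolding majorizes_def by blast
qed

lemma sum_largest_le_if_majorizes:
  assumes "majorizes u x" and "j \<le> CARD('n)"
  shows "(\<Sum>i=1..j. largest (x::real^'n::finite) i) \<le> (\<Sum>i=1..j. largest u i)"
  using assms by (cases "j = 0 \<or> j = CARD('n)") (auto simp: majorizes_def)

lemma sum_mult_le_sum_mult_if_partial_sums_le:
  fixes d a b :: "nat \<Rightarrow> 'a::linordered_idom"
  assumes d: "antimono_on {..<n} d"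
    and partial: "\<And>m. m \<le> n \<Longrightarrow> (\<Sum>k<m. a k) \<le> (\<Sum>k<m. b k)"
    and total: "(\<Sum>k<n. a k) = (\<Sum>k<n. b k)"
  shows "(\<Sum>k<n. d k * a k) \<le> (\<Sum>k<n. d k * b k)"
proof -
  define e where "e k = a k - b k" for k
  have partial_e: "(\<Sum>k<m. e k) \<le> 0" if "m \<le> n" for m
    using partial[OF that] by (simp add: e_def sum_subtractf)
  have abel: "(\<Sum>k<Suc m. d k * e k) \<le> d m * (\<Sum>k<Suc m. e k)" if "m < n" for m
    using that
  proof (induction m)
    case 0
    then show ?case by simp
  next
    case (Suc m)
    have "(d m - d (Suc m)) * (\<Sum>k<Suc m. e k) \<le> 0"
      using d Suc.prems partial_e[of "Suc m"]
      by (intro mult_nonneg_nonpos) (auto simp: monotone_on_def)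
    then have "d m * (\<Sum>k<Suc m. e k) \<le> d (Suc m) * (\<Sum>k<Suc m. e k)"
      by (simp add: algebra_simps)
    with Suc show ?case by (simp add: distrib_left)
  qed
  have "(\<Sum>k<n. d k * e k) \<le> 0"
  proof (cases n)
    case (Suc m)
    then have "(\<Sum>k<n. d k * e k) \<le> d m * (\<Sum>k<n. e k)" using abel[of m] by simp
    also have "\<dots> = 0" using total by (simp add: e_def sum_subtractf)
    finally show ?thesis .
  qed simp
  then show ?thesis by (simp add: e_def right_diff_distrib sum_subtractf)
qed

lemma inner_le_inner_permute_if_majorizes:
  fixes u x c :: "real^'n::finite"
  assumes "majorizes u x"
  shows "\<exists>\<pi>. \<pi> permutes UNIV \<and> inner c x \<le> inner c (\<chi> i. u $ \<pi> i)"
proof -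
  obtain gc where gc: "decr_enum c gc" using decr_enum_exists by blast
  obtain gu where gu: "decr_enum u gu" using decr_enum_exists by blast
  have bij_gc: "bij_betw gc {..<CARD('n)} UNIV" and bij_gu: "bij_betw gu {..<CARD('n)} UNIV"
    using gc gu by (simp_all add: decr_enum_def)
  \<comment> \<open>\<open>\<pi>\<close> moves the \<open>k\<close>-th largest entry of \<open>u\<close> to where \<open>c\<close> has its \<open>k\<close>-th largest entry\<close>
  define \<pi> where "\<pi> = gu \<circ> inv_into {..<CARD('n)} gc"
  have "bij \<pi>" unfolding \<pi>_def by (rule bij_betw_trans[OF bij_betw_inv_into[OF bij_gc] bij_gu])
  then have perm: "\<pi> permutes UNIV" by (auto intro: bij_imp_permutes)
  have "(\<Sum>k<m. x $ gc k) \<le> (\<Sum>k<m. u $ gu k)" if "m \<le> CARD('n)" for m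
  proof -
    have inj: "inj_on gc {..<m}"
      using bij_gc that by (auto simp: bij_betw_def intro: inj_on_subset)
    have "(\<Sum>k<m. x $ gc k) = (\<Sum>i\<in>gc ` {..<m}. x $ i)" by (simp add: sum.reindex[OF inj])
    also have "\<dots> \<le> (\<Sum>i=1..m. largest x i)"
      using sum_le_sum_largest[of x "gc ` {..<m}"] by (simp add: card_image[OF inj])
    also have "\<dots> \<le> (\<Sum>i=1..m. largest u i)" by (rule sum_largest_le_if_majorizes[OF assms that])
    also have "\<dots> = (\<Sum>k<m. u $ gu k)" by (rule sum_largest_decr_enum[OF gu that])
    finally show ?thesis .
  qed
  moreover have "(\<Sum>k<CARD('n). x $ gc k) = (\<Sum>k<CARD('n). u $ gu k)"
  proof -
    have "(\<Sum>k<CARD('n). x $ gc k) = (\<Sum>i=1..CARD('n). largest x i)"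
      unfolding sum_largest_all by (rule sum.reindex_bij_betw[OF bij_gc])
    also have "\<dots> = (\<Sum>i=1..CARD('n). largest u i)" using assms by (simp add: majorizes_def)
    also have "\<dots> = (\<Sum>k<CARD('n). u $ gu k)" by (rule sum_largest_decr_enum[OF gu order_refl])
    finally show ?thesis .
  qed
  moreover have "antimono_on {..<CARD('n)} (\<lambda>k. c $ gc k)"
    using gc by (simp add: decr_enum_def)
  ultimately have "(\<Sum>k<CARD('n). c $ gc k * x $ gc k) \<le> (\<Sum>k<CARD('n). c $ gc k * u $ gu k)"
    by (intro sum_mult_le_sum_mult_if_partial_sums_le)
  moreover have "gu k = \<pi> (gc k)" if "k < CARD('n)" for k
    using bij_gc that by (simp add: \<pi>_def bij_betw_def)
  ultimately have "(\<Sum>k<CARD('n). c $ gc k * x $ gc k) \<le> (\<Sum>k<CARD('n). c $ gc k * u $ \<pi> (gc k))"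
    by simp
  then have "inner c x \<le> inner c (\<chi> i. u $ \<pi> i)"
    using bij_gc by (simp add: inner_vec_def sum.reindex_bij_betw[OF bij_gc, symmetric])
  with perm show ?thesis by blast
qed

lemma mem_convex_hull_permutes_if_majorizes:
  fixes u x :: "real^'n::finite"
  assumes "majorizes u x"
  shows "x \<in> convex hull ((\<lambda>\<pi>. \<chi> i. u $ \<pi> i) ` {\<pi>. \<pi> permutes UNIV})"
proof (rule ccontr)
  define P where "P = (\<lambda>\<pi>. \<chi> i. u $ \<pi> i) ` {\<pi>. \<pi> permutes (UNIV::'n set)}"
  assume "x \<notin> convex hull P"
  moreover have "closed (convex hull P)"
    by (simp add: P_def compact_imp_closed compact_convex_hull finite_imp_compact finite_permutations)
  ultimately obtain a b where ab: "inner a x < b" "\<forall>p\<in>convex hull P. b < inner a p"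
    using separating_hyperplane_closed_point[OF convex_convex_hull] by blast
  obtain \<pi> where "\<pi> permutes UNIV" and "inner (- a) x \<le> inner (- a) (\<chi> i. u $ \<pi> i)"
    using inner_le_inner_permute_if_majorizes[OF assms] by blast
  moreover from this(1) have "(\<chi> i. u $ \<pi> i) \<in> convex hull P"
    by (auto simp: P_def intro: hull_inc)
  ultimately show False using ab by fastforce
qed

lemma perm_matrix_mult_vec: "perm_matrix \<sigma> *v x = (\<chi> i. x $ \<sigma> i)"
  unfolding perm_matrix_def
  by (simp add: matrix_vector_mult_def vec_eq_iff if_distrib[of "\<lambda>t. t * _"] cong: if_cong)

lemma perm_invariant_x_permute:
  assumes "perm_invariant_x S" "\<pi> permutes UNIV" "(x, z) \<in> S"
  shows "((\<chi> i. x $ \<pi> i), z) \<in> S"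
  using assms perm_matrix_mult_vec[of \<pi> x]
  unfolding perm_invariant_x_def is_perm_matrix_def by metis

lemma perm_invariant_x_convex_hull:
  fixes S :: "((real^'n::finite) \<times> 'b::real_vector) set"
  assumes "perm_invariant_x S"
  shows "perm_invariant_x (convex hull S)"
  unfolding perm_invariant_x_def
proof (intro allI impI, elim conjE)
  fix x z P
  assume xz: "(x, z) \<in> convex hull S" and P: "is_perm_matrix (P::real^'n^'n)"
  define f where "f = (\<lambda>(x, z). (P *v x, z :: 'b))"
  have "linear f"
    by (rule linearI) (auto simp: f_def matrix_vector_right_distrib matrix_vector_mult_scaleR)
  moreover have "f ` S \<subseteq> S"
    using assms P by (auto simp: f_def perm_invariant_x_def)
  ultimately have "f ` (convex hull S) \<subseteq> convex hull S"
    by (simp add: convex_hull_linear_image hull_mono)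
  then show "(P *v x, z) \<in> convex hull S"
    using xz by (force simp: f_def)
qed

lemma convex_perm_invariant_mem_if_majorizes:
  fixes C :: "((real^'n::finite) \<times> 'b::real_vector) set"
  assumes "convex C" "perm_invariant_x C" and "(u, z) \<in> C" "majorizes u x"
  shows "(x, z) \<in> C"
proof -
  define T where "T = (\<lambda>\<pi>. \<chi> i. u $ \<pi> i) ` {\<pi>. \<pi> permutes (UNIV::'n set)}"
  have "T \<times> {z} \<subseteq> C"
    using perm_invariant_x_permute[OF assms(2) _ assms(3)] by (auto simp: T_def)
  then have "convex hull (T \<times> {z}) \<subseteq> C"
    using assms(1) by (rule hull_minimal)
  then have "(convex hull T) \<times> {z} \<subseteq> C"
    by (simp add: convex_hull_Times)
  moreover have "x \<in> convex hull T"
    unfolding T_def by (rule mem_convex_hull_permutes_if_majorizes[OF assms(4)])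
  ultimately show ?thesis by blast
qed

lemma convex_antimono_vec: "convex {u::real^'n::{finite,linorder}. antimono (($) u)}"
  by (rule convexI) (auto intro!: antimonoI simp: add_mono mult_left_mono antimonoD)

lemma convex_hull_subset_majorized:
  fixes S :: "((real^'n::{finite,linorder}) \<times> 'b::real_vector) set"
  defines "S0 \<equiv> S \<inter> {(u, z). antimono (($) u)}"
  assumes "perm_invariant_x S"
  shows "convex hull S \<subseteq> {(x, z). \<exists>u. (u, z) \<in> convex hull S0 \<and> majorizes u x}"
    (is "_ \<subseteq> ?M")
proof (rule hull_minimal)
  show "S \<subseteq> ?M"
  proof clarify
    fix x z assume "(x, z) \<in> S"
    obtain \<pi> where \<pi>: "\<pi> permutes UNIV" "antimono (\<lambda>i. x $ \<pi> i)"
      using permutes_sorting_exists by blast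
    then have "((\<chi> i. x $ \<pi> i), z) \<in> S0"
      using perm_invariant_x_permute[OF assms(2) \<pi>(1) \<open>(x, z) \<in> S\<close>]
      by (simp add: S0_def antimono_def)
    then have "((\<chi> i. x $ \<pi> i), z) \<in> convex hull S0" by (rule hull_inc)
    with majorizes_permute[OF \<pi>(1)] show "\<exists>u. (u, z) \<in> convex hull S0 \<and> majorizes u x"
      by blast
  qed
  have "convex hull S0 \<subseteq> {u. antimono (($) u)} \<times> UNIV"
    by (rule hull_minimal) (auto simp: S0_def intro: convex_Times convex_antimono_vec)
  then have antimono_hull: "antimono (($) u)" if "(u, z) \<in> convex hull S0" for u z
    using that by blast
  show "convex ?M"
  proof (rule convexI)
    fix p q :: "(real, 'n) vec \<times> 'b" and a b :: real
    assume "p \<in> ?M" "q \<in> ?M" and ab: "0 \<le> a" "0 \<le> b" "a + b = 1"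
    then obtain u1 u2 where u1: "(u1, snd p) \<in> convex hull S0" "majorizes u1 (fst p)"
      and u2: "(u2, snd q) \<in> convex hull S0" "majorizes u2 (fst q)"
      by (auto simp: case_prod_beta)
    have "a *\<^sub>R (u1, snd p) + b *\<^sub>R (u2, snd q) \<in> convex hull S0"
      by (rule convexD[OF convex_convex_hull u1(1) u2(1) ab])
    moreover have "majorizes (a *\<^sub>R u1 + b *\<^sub>R u2) (a *\<^sub>R fst p + b *\<^sub>R fst q)"
      using u1 u2 ab antimono_hull by (intro majorizes_scaleR_add) auto
    ultimately show "a *\<^sub>R p + b *\<^sub>R q \<in> ?M"
      by (auto simp: case_prod_beta)
  qed
qed

theorem theorem1:
  fixes S :: "((real^'n::{finite,linorder}) \<times> 'b::euclidean_space) set"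
  assumes "perm_invariant_x S"
  defines "S0 \<equiv> S \<inter> {(u, z). \<forall>i j. i \<le> j \<longrightarrow> u $ i \<ge> u $ j}"
  shows "convex hull S =
    {(x, z). \<exists>u. (u, z) \<in> convex hull S0 \<and> majorizes u x}"
proof
  have S0: "S0 = S \<inter> {(u, z). antimono (($) u)}"
    by (simp add: S0_def antimono_def)
  show "convex hull S \<subseteq> {(x, z). \<exists>u. (u, z) \<in> convex hull S0 \<and> majorizes u x}"
    unfolding S0 by (rule convex_hull_subset_majorized[OF assms(1)])
  have "convex hull S0 \<subseteq> convex hull S"
    by (rule hull_mono) (simp add: S0_def)
  then show "{(x, z). \<exists>u. (u, z) \<in> convex hull S0 \<and> majorizes u x} \<subseteq> convex hull S"
    using convex_perm_invariant_mem_if_majorizes[OF convex_convex_hull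
        perm_invariant_x_convex_hull[OF assms(1)]]
    by auto
qed

end
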